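(* Let $n\ge1$, $z\in I_n$, and assume (H2)$_j(z)$ and (H3)$_j(z)$ for all $1\le j\le n$. Then for every $1\le j\le n$ and every $k\in[-\pi,\pi]^d$ with $a(k)\le\gamma j^{-1}\log j$, $$|f_j(k;z)|\le e^{CK_3\beta}\,e^{-(1-C(K_2+K_3)\beta)\,j\,a(k)},$$ where $C$ is a positive constant depending only on $d,\gamma,\delta,\rho$ (not on $K_1,\dots,K_5$, $k$, $j$, $n$, or $\beta$), valid for $\beta$ sufficiently small (depending on the $K_i$).
   Context: Let $d>4$, $L\ge1$, $\beta=L^{-d}$; fix $\gamma,\delta,\rho>0$ with $0<\frac{d-4}{2}-\rho<\gamma<\gamma+\delta<1\wedge\frac{d-4}{2}$. Let $D\ge0$ on $\mathbb Z^d$ with $\sum_xD(x)=1$, $\hat D(k)=\sum_xD(x)e^{ik\cdot x}$, $a(k)=1-\hat D(k)$, $\sigma^2=-\nabla^2\hat D(0)$. For $z>0$, $k\in[-\pi,\pi]^d$ let $f_n(k;z)$ ($n\ge0$, $f_0=1$), $g_n(k;z)$ ($n\ge1$) be complex numbers, and $v_0(z)=1$, $v_n(z)=b_n/(1+c_n)$ with $b_n=-\sigma^{-2}\sum_{m=1}^n\nabla^2g_m(0;z)$, $c_n=\sum_{m=1}^n(m-1)g_m(0;z)$. Let $z_0=z_1=1$, $z_{n+1}=1-\sum_{m=2}^{n+1}g_m(0;z_n)$, and given constants $K_1,\dots,K_5>0$, $I_n=[z_n-K_1\beta n^{-(d-2)/2},z_n+K_1\beta n^{-(d-2)/2}]$.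 (H2)$_j(z)$: $|v_j(z)-v_{j-1}(z)|\le K_2\beta j^{-(d-2)/2}$. (H3)$_j(z)$: for all $k$ with $a(k)\le\gamma j^{-1}\log j$, $f_j(k;z)=\prod_{i=1}^j[1-v_i(z)a(k)+r_i(k)]$ for some numbers $r_i(k)=r_i(k;z)$ with $|r_i(0)|\le K_3\beta i^{-(d-2)/2}$ and $|r_i(k)-r_i(0)|\le K_3\beta a(k)i^{-\delta}$. *)

theory Defs
  imports "HOL-Analysis.Analysis"
begin

text \<open>Fourier transform of a function D on Z^d (Z^d rendered as int^'n, d = CARD('n)):
  Dhat(k) = sum_x D(x) e^{i k.x}.\<close>
definition Dhat :: "(int^'n \<Rightarrow> real) \<Rightarrow> real^'n \<Rightarrow> complex" where
  "Dhat D k = infsum (\<lambda>x. complex_of_real (D x) * cis (k \<bullet> (\<chi> i. real_of_int (x $ i)))) UNIV"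

definition afun :: "(int^'n \<Rightarrow> real) \<Rightarrow> real^'n \<Rightarrow> complex" where
  "afun D k = 1 - Dhat D k"

definition lap0 :: "(real^'n \<Rightarrow> complex) \<Rightarrow> complex" where
  "lap0 F = (\<Sum>i\<in>UNIV. vector_derivative
      (\<lambda>t. vector_derivative (\<lambda>s. F (axis i s)) (at t)) (at 0))"

definition sigma2 :: "(int^'n \<Rightarrow> real) \<Rightarrow> complex" where
  "sigma2 D = - lap0 (Dhat D)"

text \<open>b_n, c_n, v_n; g :: m \<Rightarrow> k \<Rightarrow> z \<Rightarrow> complex stands for g_m(k;z).\<close>
definition bfun :: "(int^'n \<Rightarrow> real) \<Rightarrow> (nat \<Rightarrow> real^'n \<Rightarrow> real \<Rightarrow> complex) \<Rightarrow> real \<Rightarrow> nat \<Rightarrow> complex" where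
  "bfun D g z n = - (1 / sigma2 D) * (\<Sum>m=1..n. lap0 (\<lambda>k. g m k z))"

definition cfun :: "(nat \<Rightarrow> real^'n \<Rightarrow> real \<Rightarrow> complex) \<Rightarrow> real \<Rightarrow> nat \<Rightarrow> complex" where
  "cfun g z n = (\<Sum>m=1..n. of_nat (m - 1) * g m 0 z)"

definition vfun :: "(int^'n \<Rightarrow> real) \<Rightarrow> (nat \<Rightarrow> real^'n \<Rightarrow> real \<Rightarrow> complex) \<Rightarrow> real \<Rightarrow> nat \<Rightarrow> complex" where
  "vfun D g z n = (if n = 0 then 1 else bfun D g z n / (1 + cfun g z n))"

text \<open>z_0 = z_1 = 1, z_{n+1} = 1 - sum_{m=2}^{n+1} g_m(0;z_n)
  (real part taken; g_m(0;z) is real in the paper).\<close>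
fun zseq :: "(nat \<Rightarrow> real^'n \<Rightarrow> real \<Rightarrow> complex) \<Rightarrow> nat \<Rightarrow> real" where
  "zseq g 0 = 1"
| "zseq g (Suc n) = (if n = 0 then 1 else 1 - Re (\<Sum>m=2..Suc n. g m 0 (zseq g n)))"

definition Iint :: "(nat \<Rightarrow> real^'n \<Rightarrow> real \<Rightarrow> complex) \<Rightarrow> real \<Rightarrow> real \<Rightarrow> nat \<Rightarrow> real set" where
  "Iint g K1 \<beta> n = {zseq g n - K1 * \<beta> * real n powr (-(real CARD('n) - 2) / 2) ..
                     zseq g n + K1 * \<beta> * real n powr (-(real CARD('n) - 2) / 2)}"

definition box_pi :: "(real^'n) set" where
  "box_pi = {k. \<forall>i. -pi \<le> k $ i \<and> k $ i \<le> pi}"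

text \<open>a(k) \<le> gamma j^{-1} log j (a(k) is required to be real for the inequality to make sense).\<close>
definition small_a :: "(int^'n \<Rightarrow> real) \<Rightarrow> real \<Rightarrow> nat \<Rightarrow> real^'n \<Rightarrow> bool" where
  "small_a D \<gamma> j k \<longleftrightarrow> Im (afun D k) = 0 \<and> Re (afun D k) \<le> \<gamma> / real j * ln (real j)"

definition H2 :: "(int^'n \<Rightarrow> real) \<Rightarrow> (nat \<Rightarrow> real^'n \<Rightarrow> real \<Rightarrow> complex) \<Rightarrow> real \<Rightarrow> real \<Rightarrow> nat \<Rightarrow> real \<Rightarrow> bool" where
  "H2 D g K2 \<beta> j z \<longleftrightarrow>
     cmod (vfun D g z j - vfun D g z (j - 1)) \<le> K2 * \<beta> * real j powr (-(real CARD('n) - 2) / 2)"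

definition H3 :: "(int^'n \<Rightarrow> real) \<Rightarrow> (nat \<Rightarrow> real^'n \<Rightarrow> real \<Rightarrow> complex) \<Rightarrow>
    (nat \<Rightarrow> real^'n \<Rightarrow> real \<Rightarrow> complex) \<Rightarrow> real \<Rightarrow> real \<Rightarrow> real \<Rightarrow> real \<Rightarrow> nat \<Rightarrow> real \<Rightarrow> bool" where
  "H3 D f g \<gamma> \<delta> K3 \<beta> j z \<longleftrightarrow>
     (\<exists>r :: nat \<Rightarrow> real^'n \<Rightarrow> complex.
        (\<forall>k \<in> box_pi. small_a D \<gamma> j k \<longrightarrow>
           f j k z = (\<Prod>i=1..j. 1 - vfun D g z i * afun D k + r i k)
         \<and> (\<forall>i\<in>{1..j}. cmod (r i 0) \<le> K3 * \<beta> * real i powr (-(real CARD('n) - 2) / 2)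
                      \<and> cmod (r i k - r i 0) \<le> K3 * \<beta> * Re (afun D k) * real i powr (-\<delta>))))"

end

theory Submission
  imports Defs
begin

text \<open>By (H3), f_j(k) is the product of the factors 1 - v_i a + r_i(k), where a = a(k) lies
  in [0,1]. Telescoping (H2) gives |v_i - 1| \<le> K_2 \<beta> S with S = \<Sum>_i i^(-(d-2)/2), which is
  finite since d > 4. Hence, by 1 + x \<le> e^x, the i-th factor has modulus at most
  exp (- a (1 - K_2 \<beta> S - K_3 \<beta>) + K_3 \<beta> i^(-(d-2)/2)), and multiplying the factors gives
  the claim with C = max 1 S. No smallness of \<beta> is needed.\<close>

lemma norm_perturbed_factor_le_exp:
  fixes w r0 r :: "'a::real_normed_algebra_1" and a A B E :: real
  assumes "0 \<le> a" "a \<le> 1" "norm w \<le> A" "norm r0 \<le> B" "norm (r - r0) \<le> E * a"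
  shows "norm (1 - (1 + w) * of_real a + r) \<le> exp (- a * (1 - A - E) + B)"
proof -
  have "1 - (1 + w) * of_real a + r = of_real (1 - a) - w * of_real a + r0 + (r - r0)"
    by (simp add: algebra_simps)
  also have "norm \<dots> \<le> norm (of_real (1 - a) :: 'a) + norm (w * of_real a) + norm r0 + norm (r - r0)"
    by (meson norm_triangle_ineq norm_triangle_ineq4 order_trans add_mono order_refl)
  also have "\<dots> \<le> (1 - a) + A * a + B + E * a"
  proof -
    have "norm (of_real (1 - a) :: 'a) = 1 - a"
      using assms(2) by (simp only: norm_of_real)
    moreover have "norm (w * of_real a) \<le> A * a"
      using norm_mult_ineq[of w "of_real a"] assms(1,3) mult_right_mono[of "norm w" A a] by simp
    ultimately show ?thesis
      using assms(4,5) by linarith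
  qed
  also have "\<dots> = 1 + (- a * (1 - A - E) + B)"
    by (simp add: algebra_simps)
  also have "\<dots> \<le> exp (- a * (1 - A - E) + B)"
    by (rule exp_ge_add_one_self)
  finally show ?thesis .
qed

lemma norm_sub_le_sum_increments:
  fixes v :: "nat \<Rightarrow> 'a::real_normed_vector"
  assumes "\<And>i. i \<in> {1..n} \<Longrightarrow> norm (v i - v (i - 1)) \<le> e i"
  shows "norm (v n - v 0) \<le> (\<Sum>i=1..n. e i)"
  using assms
proof (induction n)
  case 0
  then show ?case by simp
next
  case (Suc n)
  have "norm (v (Suc n) - v 0) \<le> norm (v (Suc n) - v n) + norm (v n - v 0)"
    using norm_triangle_ineq[of "v (Suc n) - v n" "v n - v 0"] by simp
  also have "\<dots> \<le> e (Suc n) + (\<Sum>i=1..n. e i)"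
    using Suc.IH Suc.prems Suc.prems[of "Suc n"] by (intro add_mono) auto
  finally show ?case by simp
qed

lemma norm_prod_le_exp_sum:
  fixes x :: "'i \<Rightarrow> 'a::{comm_semiring_1,real_normed_div_algebra}"
  assumes "finite I" "\<And>i. i \<in> I \<Longrightarrow> norm (x i) \<le> exp (b i)"
  shows "norm (\<Prod>i\<in>I. x i) \<le> exp (\<Sum>i\<in>I. b i)"
  using assms by (simp add: prod_norm[symmetric] exp_sum prod_mono)

lemma sum_powr_le_suminf:
  assumes "p < -1"
  shows "(\<Sum>i=1..m. real i powr p) \<le> (\<Sum>i. real i powr p)"
  using assms by (intro sum_le_suminf) (auto simp: summable_real_powr_iff)

lemma div_mult_ln_le_one:
  assumes "0 \<le> \<gamma>" "\<gamma> \<le> 1" "1 \<le> j"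
  shows "\<gamma> / real j * ln (real j) \<le> 1"
proof -
  have "ln (real j) \<le> real j - 1" using assms by (intro ln_le_minus_one) auto
  then have "ln (real j) / real j \<le> 1" using assms by (simp add: divide_simps)
  then have "\<gamma> * (ln (real j) / real j) \<le> 1 * 1"
    using assms by (intro mult_mono) auto
  then show ?thesis by simp
qed

lemma norm_prod_perturbed_factors_le:
  fixes v r r0 :: "nat \<Rightarrow> 'a::real_normed_field" and e :: "nat \<Rightarrow> real" and a :: real
  assumes "0 \<le> a" "a \<le> 1" "0 \<le> \<epsilon>2" "0 \<le> \<epsilon>3" "v 0 = 1"
    and e_nonneg: "\<And>i. i \<in> {1..j} \<Longrightarrow> 0 \<le> e i"
    and e_sum: "(\<Sum>i=1..j. e i) \<le> S"
    and v_incr: "\<And>i. i \<in> {1..j} \<Longrightarrow> norm (v i - v (i - 1)) \<le> \<epsilon>2 * e i"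
    and r0: "\<And>i. i \<in> {1..j} \<Longrightarrow> norm (r0 i) \<le> \<epsilon>3 * e i"
    and r: "\<And>i. i \<in> {1..j} \<Longrightarrow> norm (r i - r0 i) \<le> \<epsilon>3 * a"
  shows "norm (\<Prod>i=1..j. 1 - v i * of_real a + r i)
    \<le> exp (\<epsilon>3 * S) * exp (- (1 - \<epsilon>2 * S - \<epsilon>3) * real j * a)"
proof -
  have v_near_one: "norm (v i - 1) \<le> \<epsilon>2 * S" if "i \<in> {1..j}" for i
  proof -
    have "norm (v i - v 0) \<le> (\<Sum>m=1..i. \<epsilon>2 * e m)"
      using that by (intro norm_sub_le_sum_increments v_incr) auto
    also have "\<dots> \<le> \<epsilon>2 * (\<Sum>m=1..j. e m)"
      using that e_nonneg \<open>0 \<le> \<epsilon>2\<close>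
      by (auto simp: sum_distrib_left[symmetric] intro!: mult_left_mono sum_mono2)
    also have "\<dots> \<le> \<epsilon>2 * S"
      using e_sum \<open>0 \<le> \<epsilon>2\<close> by (rule mult_left_mono)
    finally show ?thesis using \<open>v 0 = 1\<close> by simp
  qed
  have factor: "norm (1 - v i * of_real a + r i) \<le> exp (- a * (1 - \<epsilon>2 * S - \<epsilon>3) + \<epsilon>3 * e i)"
    if "i \<in> {1..j}" for i
    using norm_perturbed_factor_le_exp[of a "v i - 1" "\<epsilon>2 * S" "r0 i" "\<epsilon>3 * e i" "r i" "\<epsilon>3"]
      assms(1,2) v_near_one r0 r that by simp
  have "norm (\<Prod>i=1..j. 1 - v i * of_real a + r i)
      \<le> exp (\<Sum>i=1..j. - a * (1 - \<epsilon>2 * S - \<epsilon>3) + \<epsilon>3 * e i)"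
    using factor by (intro norm_prod_le_exp_sum) auto
  also have "(\<Sum>i=1..j. - a * (1 - \<epsilon>2 * S - \<epsilon>3) + \<epsilon>3 * e i)
      = \<epsilon>3 * (\<Sum>i=1..j. e i) + - (1 - \<epsilon>2 * S - \<epsilon>3) * real j * a"
    unfolding sum.distrib by (simp add: sum_distrib_left[symmetric] algebra_simps)
  also have "\<dots> \<le> \<epsilon>3 * S + - (1 - \<epsilon>2 * S - \<epsilon>3) * real j * a"
    using e_sum \<open>0 \<le> \<epsilon>3\<close> by (simp add: mult_left_mono)
  finally show ?thesis by (simp add: exp_add)
qed

lemma norm_f_le_exp_of_H2_H3:
  fixes D :: "int^'n \<Rightarrow> real" and f g :: "nat \<Rightarrow> real^'n \<Rightarrow> real \<Rightarrow> complex"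
  assumes "CARD('n) > 4" "0 < \<gamma>" "\<gamma> \<le> 1" "0 \<le> \<delta>" "0 \<le> K2" "0 < K3" "0 < \<beta>"
    and "(\<Sum>i. real i powr (-(real CARD('n) - 2) / 2)) \<le> C" "1 \<le> C"
    and H2: "\<forall>i\<in>{1..n}. H2 D g K2 \<beta> i z" and H3: "H3 D f g \<gamma> \<delta> K3 \<beta> j z"
    and j: "j \<in> {1..n}" and k: "k \<in> box_pi" "small_a D \<gamma> j k"
  shows "cmod (f j k z) \<le> exp (C * K3 * \<beta>) * exp (- (1 - C * (K2 + K3) * \<beta>) * real j * Re (afun D k))"
proof -
  define p where "p = -(real CARD('n) - 2) / 2"
  define S where "S = (\<Sum>i. real i powr p)"
  define a where "a = Re (afun D k)"
  from H3 k obtain r where f_prod: "f j k z = (\<Prod>i=1..j. 1 - vfun D g z i * afun D k + r i k)"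
    and r0: "\<And>i. i \<in> {1..j} \<Longrightarrow> cmod (r i 0) \<le> K3 * \<beta> * real i powr p"
    and rk: "\<And>i. i \<in> {1..j} \<Longrightarrow> cmod (r i k - r i 0) \<le> K3 * \<beta> * a * real i powr (-\<delta>)"
    unfolding H3_def p_def a_def by blast
  have afun_real: "afun D k = of_real a"
    using k(2) by (simp add: small_a_def a_def complex_eq_iff)
  \<comment> \<open>\<open>a(k) \<ge> 0\<close> is forced by the (H3) bound on \<open>r\<^sub>1(k) - r\<^sub>1(0)\<close>.\<close>
  have "0 \<le> K3 * \<beta> * a"
    using order_trans[OF norm_ge_zero rk[of 1]] j by simp
  then have "0 \<le> a"
    using zero_le_mult_iff[of "K3 * \<beta>" a] mult_pos_pos[OF \<open>0 < K3\<close> \<open>0 < \<beta>\<close>] by linarith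
  have "a \<le> \<gamma> / real j * ln (real j)"
    using k(2) by (simp add: small_a_def a_def)
  also have "\<dots> \<le> 1"
    using j assms(2,3) by (intro div_mult_ln_le_one) auto
  finally have "a \<le> 1" .
  have rk': "cmod (r i k - r i 0) \<le> K3 * \<beta> * a" if "i \<in> {1..j}" for i
  proof -
    have "real i powr (-\<delta>) \<le> real i powr 0"
      using that \<open>0 \<le> \<delta>\<close> by (intro powr_mono) auto
    then have "K3 * \<beta> * a * real i powr (-\<delta>) \<le> K3 * \<beta> * a"
      using that \<open>0 \<le> a\<close> \<open>0 < K3\<close> \<open>0 < \<beta>\<close> by (simp add: mult_left_le)
    then show ?thesis using rk[OF that] by linarith
  qed
  have "S \<le> C" and partial_sum_le: "(\<Sum>i=1..j. real i powr p) \<le> S"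
    using assms(1,8) sum_powr_le_suminf[of p j] by (simp_all add: S_def p_def)
  have "cmod (f j k z) \<le> exp (K3 * \<beta> * S) * exp (- (1 - K2 * \<beta> * S - K3 * \<beta>) * real j * a)"
    unfolding f_prod afun_real
  proof (rule norm_prod_perturbed_factors_le[where e = "\<lambda>i. real i powr p"])
    show "cmod (vfun D g z i - vfun D g z (i - 1)) \<le> K2 * \<beta> * real i powr p" if "i \<in> {1..j}" for i
      using H2 that j unfolding H2_def p_def by auto
  qed (use \<open>0 \<le> a\<close> \<open>a \<le> 1\<close> partial_sum_le assms r0 rk' in \<open>auto simp: vfun_def\<close>)
  also have "\<dots> \<le> exp (C * K3 * \<beta>) * exp (- (1 - C * (K2 + K3) * \<beta>) * real j * a)"
  proof -
    have "K2 * S + K3 * 1 \<le> K2 * C + K3 * C"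
      using \<open>S \<le> C\<close> \<open>1 \<le> C\<close> assms(5,6) by (intro add_mono mult_left_mono) auto
    then have "K2 * S + K3 \<le> C * (K2 + K3)"
      by (simp add: algebra_simps)
    then have "(K2 * S + K3) * (\<beta> * real j * a) \<le> C * (K2 + K3) * (\<beta> * real j * a)"
      using \<open>0 < \<beta>\<close> \<open>0 \<le> a\<close> by (intro mult_right_mono) auto
    moreover have "K3 * \<beta> * S \<le> C * K3 * \<beta>"
      using \<open>S \<le> C\<close> assms(6,7) by simp
    ultimately show ?thesis
      by (intro mult_mono) (auto simp: algebra_simps)
  qed
  finally show ?thesis by (simp add: a_def)
qed

theorem lemma2p2:
  fixes \<gamma> \<delta> \<rho> :: real
  assumes "CARD('n) > 4"
    and "\<rho> > 0" and "\<gamma> > 0" and "\<delta> > 0"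
    and "0 < (real CARD('n) - 4) / 2 - \<rho>"
    and "(real CARD('n) - 4) / 2 - \<rho> < \<gamma>"
    and "\<gamma> + \<delta> < min 1 ((real CARD('n) - 4) / 2)"
  shows "\<exists>C > 0. \<forall>(K1::real) (K2::real) (K3::real) (K4::real) (K5::real). K1 > 0 \<and> K2 > 0 \<and> K3 > 0 \<and> K4 > 0 \<and> K5 > 0 \<longrightarrow>
    (\<exists>\<beta>0 > 0. \<forall>(\<beta>::real) (L::real) (D :: int^'n \<Rightarrow> real)
        (f :: nat \<Rightarrow> real^'n \<Rightarrow> real \<Rightarrow> complex) (g :: nat \<Rightarrow> real^'n \<Rightarrow> real \<Rightarrow> complex)
        (n::nat) (z::real) (j::nat) (k::real^'n).
       L \<ge> 1 \<and> \<beta> = L powr (- real CARD('n)) \<and> \<beta> \<le> \<beta>0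
       \<and> (\<forall>x. D x \<ge> 0) \<and> (D has_sum 1) UNIV
       \<and> (\<forall>k' z'. f 0 k' z' = 1)
       \<and> n \<ge> 1 \<and> z > 0 \<and> z \<in> Iint g K1 \<beta> n
       \<and> (\<forall>j'\<in>{1..n}. H2 D g K2 \<beta> j' z \<and> H3 D f g \<gamma> \<delta> K3 \<beta> j' z)
       \<and> j \<in> {1..n} \<and> k \<in> box_pi \<and> small_a D \<gamma> j k
       \<longrightarrow> cmod (f j k z) \<le> exp (C * K3 * \<beta>) *
              exp (- (1 - C * (K2 + K3) * \<beta>) * real j * Re (afun D k)))"
proof -
  have "\<gamma> \<le> 1"
    using assms(4,7) by simp
  define C where "C = max 1 (\<Sum>i. real i powr (-(real CARD('n) - 2) / 2))"
  have bound: "cmod (f j k z) \<le> exp (C * K3 * \<beta>) * exp (- (1 - C * (K2 + K3) * \<beta>) * real j * Re (afun D k))"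
    if "0 < K2" "0 < K3" "1 \<le> L" "\<beta> = L powr (- real CARD('n))"
      and "\<forall>j'\<in>{1..n}. H2 D g K2 \<beta> j' z \<and> H3 D f g \<gamma> \<delta> K3 \<beta> j' z"
      and "j \<in> {1..n}" "k \<in> box_pi" "small_a D \<gamma> j k"
    for K2 K3 \<beta> L :: real and D :: "int^'n \<Rightarrow> real" and f g :: "nat \<Rightarrow> real^'n \<Rightarrow> real \<Rightarrow> complex"
      and n j :: nat and z :: real and k :: "real^'n"
    by (rule norm_f_le_exp_of_H2_H3[where \<gamma> = \<gamma> and \<delta> = \<delta>])
      (use that assms(1,3,4) \<open>\<gamma> \<le> 1\<close> in \<open>auto simp: C_def\<close>)
  have "0 < C"
    by (simp add: C_def)
  show ?thesis
    by (rule exI[of _ C], intro conjI allI impI exI[of _ "1::real"]) (use \<open>0 < C\<close> bound in auto)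
qed

end
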